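(* If $A$ and $B$ are finitely generated left-orderable groups that are both Prieto, then $A\times B$ is Prieto.
   Context: A positive cone of a group $G$ is a subsemigroup $P$ with $G=P\sqcup P^{-1}\sqcup\{1\}$. A finitely generated left-orderable group $G$ is Prieto if every positive cone of $G$ is coarsely connected with respect to the word metric $d_X$ of some (equivalently any) finite generating set $X$, i.e. for each positive cone $P$ there is $r\ge1$ such that any two elements of $P$ are joined by a sequence $p_0,\dots,p_n$ in $P$ with $d_X(p_i,p_{i+1})\le r$. *)

theory Defs
  imports "HOL-Algebra.Algebra"
begin

definition fin_gen_set :: "('a, 'b) monoid_scheme \<Rightarrow> 'a set \<Rightarrow> bool" where
  "fin_gen_set M Gen \<longleftrightarrow> finite Gen \<and> Gen \<subseteq> carrier M \<and> generate M Gen = carrier M"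

definition finitely_generated :: "('a, 'b) monoid_scheme \<Rightarrow> bool" where
  "finitely_generated M \<longleftrightarrow> (\<exists>Gen. fin_gen_set M Gen)"

definition word_length :: "('a, 'b) monoid_scheme \<Rightarrow> 'a set \<Rightarrow> 'a \<Rightarrow> nat" where
  "word_length M Gen g = (LEAST n. \<exists>ws. set ws \<subseteq> Gen \<union> (\<lambda>x. inv\<^bsub>M\<^esub> x) ` Gen \<and> length ws = n
      \<and> foldr (\<lambda>x y. x \<otimes>\<^bsub>M\<^esub> y) ws \<one>\<^bsub>M\<^esub> = g)"

definition word_dist :: "('a, 'b) monoid_scheme \<Rightarrow> 'a set \<Rightarrow> 'a \<Rightarrow> 'a \<Rightarrow> nat" where
  "word_dist M Gen g h = word_length M Gen (inv\<^bsub>M\<^esub> g \<otimes>\<^bsub>M\<^esub> h)"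

definition positive_cone :: "('a, 'b) monoid_scheme \<Rightarrow> 'a set \<Rightarrow> bool" where
  "positive_cone M P \<longleftrightarrow> P \<subseteq> carrier M
     \<and> (\<forall>p\<in>P. \<forall>q\<in>P. p \<otimes>\<^bsub>M\<^esub> q \<in> P)
     \<and> carrier M = P \<union> (\<lambda>x. inv\<^bsub>M\<^esub> x) ` P \<union> {\<one>\<^bsub>M\<^esub>}
     \<and> P \<inter> (\<lambda>x. inv\<^bsub>M\<^esub> x) ` P = {}
     \<and> \<one>\<^bsub>M\<^esub> \<notin> P \<and> \<one>\<^bsub>M\<^esub> \<notin> (\<lambda>x. inv\<^bsub>M\<^esub> x) ` P"

definition left_orderable :: "('a, 'b) monoid_scheme \<Rightarrow> bool" where
  "left_orderable M \<longleftrightarrow> (\<exists>P. positive_cone M P)"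

definition coarsely_connected :: "('a, 'b) monoid_scheme \<Rightarrow> 'a set \<Rightarrow> 'a set \<Rightarrow> bool" where
  "coarsely_connected M Gen S \<longleftrightarrow> (\<exists>r::nat. r \<ge> 1 \<and> (\<forall>p\<in>S. \<forall>q\<in>S. \<exists>ps. ps \<noteq> []
      \<and> hd ps = p \<and> last ps = q \<and> set ps \<subseteq> S
      \<and> (\<forall>i. Suc i < length ps \<longrightarrow> word_dist M Gen (ps ! i) (ps ! Suc i) \<le> r)))"

definition Prieto :: "('a, 'b) monoid_scheme \<Rightarrow> bool" where
  "Prieto M \<longleftrightarrow> (\<exists>Gen. fin_gen_set M Gen \<and> (\<forall>P. positive_cone M P \<longrightarrow> coarsely_connected M Gen P))"

end

theory Submission
  imports Defs
begin

text \<open>Let P be a positive cone of A \<times> B. Its traces on the factors,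
  QA = {a. (a, 1) \<in> P} and QB = {b. (1, b) \<in> P}, are positive cones of A and B, hence
  coarsely connected. Because P is a semigroup, left multiplication by g \<in> P carries a coarse
  path in QA \<times> {1} into P, so g is joined inside P to g (c, 1) for every c \<in> QA, at a
  uniformly bounded step size; likewise for QB. Two points (a, b) and (a', b') of P are then
  joined through (u, b), (u, v) and (u, b'), where u and v are the larger of a, a' and of b, b'
  in the left orders of A and B. For the generating set GA \<times> {1} \<union> {1} \<times> GB the word metric of
  A \<times> B is symmetric, left invariant and does not increase along the factor inclusions, which
  is all the bookkeeping requires.\<close>

definition coarse_step :: "('a, 'b) monoid_scheme \<Rightarrow> 'a set \<Rightarrow> 'a set \<Rightarrow> nat \<Rightarrow> 'a \<Rightarrow> 'a \<Rightarrow> bool"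
  where "coarse_step M Gen S r p q \<longleftrightarrow> p \<in> S \<and> q \<in> S \<and> word_dist M Gen p q \<le> r"

lemma successively_imp_rtranclp:
  "successively R ps \<Longrightarrow> ps \<noteq> [] \<Longrightarrow> R\<^sup>*\<^sup>* (hd ps) (last ps)"
  by (induction R ps rule: successively.induct) (auto intro: converse_rtranclp_into_rtranclp)

lemma rtranclp_imp_successively:
  assumes "R\<^sup>*\<^sup>* p q"
  shows "\<exists>ps. ps \<noteq> [] \<and> hd ps = p \<and> last ps = q \<and> successively R ps"
  using assms
proof (induction rule: converse_rtranclp_induct)
  case base
  show ?case by (intro exI[of _ "[q]"]) simp
next
  case (step y z)
  then obtain ps where "ps \<noteq> []" "hd ps = z" "last ps = q" "successively R ps" by blast
  with step.hyps(1) show ?case by (intro exI[of _ "y # ps"]) (simp add: successively_Cons)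
qed

lemma successively_coarse_step_subset:
  "successively (coarse_step M Gen S r) ps \<Longrightarrow> hd ps \<in> S \<Longrightarrow> set ps \<subseteq> S"
  by (induction ps rule: induct_list012) (auto simp: coarse_step_def)

lemma successively_coarse_step_iff:
  assumes "set ps \<subseteq> S"
  shows "successively (coarse_step M Gen S r) ps \<longleftrightarrow>
    (\<forall>i. Suc i < length ps \<longrightarrow> word_dist M Gen (ps ! i) (ps ! Suc i) \<le> r)"
proof -
  have "successively (coarse_step M Gen S r) ps \<longleftrightarrow> successively (\<lambda>p q. word_dist M Gen p q \<le> r) ps"
    using assms by (intro successively_cong) (auto simp: coarse_step_def)
  then show ?thesis by (simp add: successively_conv_nth)
qed

lemma coarsely_connected_iff_rtranclp:
  "coarsely_connected M Gen S \<longleftrightarrow>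
    (\<exists>r\<ge>1. \<forall>p\<in>S. \<forall>q\<in>S. (coarse_step M Gen S r)\<^sup>*\<^sup>* p q)"
proof -
  have "(\<exists>ps. ps \<noteq> [] \<and> hd ps = p \<and> last ps = q \<and> set ps \<subseteq> S
      \<and> (\<forall>i. Suc i < length ps \<longrightarrow> word_dist M Gen (ps ! i) (ps ! Suc i) \<le> r))
    \<longleftrightarrow> (coarse_step M Gen S r)\<^sup>*\<^sup>* p q" if "p \<in> S" for p q r
    using that rtranclp_imp_successively[of "coarse_step M Gen S r" p q]
      successively_imp_rtranclp successively_coarse_step_subset successively_coarse_step_iff
    by metis
  then show ?thesis unfolding coarsely_connected_def by (metis (no_types, lifting))
qed

lemma rtranclp_coarse_step_mono:
  "(coarse_step M Gen S r)\<^sup>*\<^sup>* p q \<Longrightarrow> r \<le> r' \<Longrightarrow> (coarse_step M Gen S r')\<^sup>*\<^sup>* p q"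
  by (erule mono_rtranclp[rule_format, rotated]) (auto simp: coarse_step_def)

lemma (in monoid) foldr_mult_append:
  "set xs \<subseteq> carrier G \<Longrightarrow> set ys \<subseteq> carrier G \<Longrightarrow>
    foldr (\<otimes>) (xs @ ys) \<one> = foldr (\<otimes>) xs \<one> \<otimes> foldr (\<otimes>) ys \<one>"
  by (induction xs) (auto simp: m_assoc)

lemma (in group) foldr_mult_rev_map_inv:
  "set ws \<subseteq> carrier G \<Longrightarrow> foldr (\<otimes>) (rev (map (\<lambda>w. inv w) ws)) \<one> = inv (foldr (\<otimes>) ws \<one>)"
proof (induction ws)
  case (Cons w ws)
  have "set (rev (map (\<lambda>w. inv w) ws)) \<subseteq> carrier G" using Cons.prems by auto
  then show ?case
    using Cons foldr_mult_append[of "rev (map (\<lambda>w. inv w) ws)" "[inv w]"]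
    by (simp add: inv_mult_group del: foldr_append)
qed simp

lemma (in group) obtain_word:
  assumes "Gen \<subseteq> carrier G" "g \<in> generate G Gen"
  obtains ws where "set ws \<subseteq> Gen \<union> (\<lambda>x. inv x) ` Gen" "foldr (\<otimes>) ws \<one> = g"
proof -
  have "\<exists>ws. set ws \<subseteq> Gen \<union> (\<lambda>x. inv x) ` Gen \<and> foldr (\<otimes>) ws \<one> = g"
    using assms(2)
  proof (induction rule: generate.induct)
    case one
    show ?case by (intro exI[of _ "[]"]) simp
  next
    case (incl h)
    then show ?case using assms(1) by (intro exI[of _ "[h]"]) auto
  next
    case (inv h)
    then show ?case using assms(1) by (intro exI[of _ "[inv h]"]) auto
  next
    case (eng h1 h2)
    then obtain ws1 ws2 where ws:
      "set ws1 \<subseteq> Gen \<union> (\<lambda>x. inv x) ` Gen" "foldr (\<otimes>) ws1 \<one> = h1"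
      "set ws2 \<subseteq> Gen \<union> (\<lambda>x. inv x) ` Gen" "foldr (\<otimes>) ws2 \<one> = h2" by blast
    moreover have "set ws1 \<subseteq> carrier G" "set ws2 \<subseteq> carrier G" using ws(1,3) assms(1) by auto
    ultimately show ?case
      by (intro exI[of _ "ws1 @ ws2"]) (auto simp: foldr_mult_append simp del: foldr_append)
  qed
  then show ?thesis using that by blast
qed

lemma (in group) obtain_shortest_word:
  assumes "Gen \<subseteq> carrier G" "g \<in> generate G Gen"
  obtains ws where "set ws \<subseteq> Gen \<union> (\<lambda>x. inv x) ` Gen" "length ws = word_length G Gen g"
    "foldr (\<otimes>) ws \<one> = g"
proof -
  obtain ws where "set ws \<subseteq> Gen \<union> (\<lambda>x. inv x) ` Gen" "foldr (\<otimes>) ws \<one> = g"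
    using obtain_word[OF assms] .
  then have "\<exists>n ws. set ws \<subseteq> Gen \<union> (\<lambda>x. inv x) ` Gen \<and> length ws = n \<and> foldr (\<otimes>) ws \<one> = g"
    by blast
  from LeastI_ex[OF this] show ?thesis
    using that unfolding word_length_def by blast
qed

lemma word_length_le:
  "set ws \<subseteq> Gen \<union> (\<lambda>x. inv\<^bsub>M\<^esub> x) ` Gen \<Longrightarrow> foldr (\<otimes>\<^bsub>M\<^esub>) ws \<one>\<^bsub>M\<^esub> = g \<Longrightarrow>
    word_length M Gen g \<le> length ws"
  unfolding word_length_def by (rule Least_le) blast

lemma (in group) word_length_inv_le:
  assumes "Gen \<subseteq> carrier G" "g \<in> generate G Gen"
  shows "word_length G Gen (inv g) \<le> word_length G Gen g"
proof -
  obtain ws where ws: "set ws \<subseteq> Gen \<union> (\<lambda>x. inv x) ` Gen" "length ws = word_length G Gen g"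
    "foldr (\<otimes>) ws \<one> = g"
    using obtain_shortest_word[OF assms] .
  have carr: "set ws \<subseteq> carrier G" using ws(1) assms(1) by auto
  have "set (rev (map (\<lambda>w. inv w) ws)) \<subseteq> Gen \<union> (\<lambda>x. inv x) ` Gen"
    using ws(1) assms(1) by (auto simp: subset_iff)
  moreover have "foldr (\<otimes>) (rev (map (\<lambda>w. inv w) ws)) \<one> = inv g"
    using foldr_mult_rev_map_inv[OF carr] ws(3) by simp
  ultimately have "word_length G Gen (inv g) \<le> length (rev (map (\<lambda>w. inv w) ws))"
    by (rule word_length_le)
  with ws(2) show ?thesis by simp
qed

lemma (in group) word_dist_commute:
  assumes "Gen \<subseteq> carrier G" "generate G Gen = carrier G" "x \<in> carrier G" "y \<in> carrier G"
  shows "word_dist G Gen x y = word_dist G Gen y x"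
proof -
  have "word_dist G Gen y x \<le> word_dist G Gen x y" if "x \<in> carrier G" "y \<in> carrier G" for x y
    using word_length_inv_le[OF assms(1), of "inv x \<otimes> y"] that assms(2)
    by (simp add: word_dist_def inv_mult_group)
  then show ?thesis using assms(3,4) by (simp add: order_antisym)
qed

lemma (in group) word_dist_mult_left:
  assumes "g \<in> carrier G" "x \<in> carrier G" "y \<in> carrier G"
  shows "word_dist G Gen (g \<otimes> x) (g \<otimes> y) = word_dist G Gen x y"
  using assms by (simp add: word_dist_def inv_mult_group m_assoc[symmetric]) (simp add: m_assoc)

lemma (in group_hom) word_length_hom_le:
  assumes "K \<subseteq> carrier G" "h ` K \<subseteq> Gen" "x \<in> generate G K"
  shows "word_length H Gen (h x) \<le> word_length G K x"
proof -
  obtain ws where ws: "set ws \<subseteq> K \<union> (\<lambda>x. inv x) ` K" "length ws = word_length G K x"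
    "foldr (\<otimes>) ws \<one> = x"
    using G.obtain_shortest_word[OF assms(1,3)] .
  have carr: "set ws \<subseteq> carrier G" using ws(1) assms(1) by auto
  have hom_foldr: "h (foldr (\<otimes>) zs \<one>) = foldr (\<otimes>\<^bsub>H\<^esub>) (map h zs) \<one>\<^bsub>H\<^esub>"
    if "set zs \<subseteq> carrier G" for zs
    using that by (induction zs) auto
  have "set (map h ws) \<subseteq> Gen \<union> (\<lambda>x. inv\<^bsub>H\<^esub> x) ` Gen"
    using ws(1) assms(1,2) by (auto simp: subset_iff)
  moreover have "foldr (\<otimes>\<^bsub>H\<^esub>) (map h ws) \<one>\<^bsub>H\<^esub> = h x" using ws(3) hom_foldr[OF carr] by simp
  ultimately have "word_length H Gen (h x) \<le> length (map h ws)"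
    by (rule word_length_le)
  with ws(2) show ?thesis by simp
qed

lemma (in group_hom) word_dist_hom_le:
  assumes "K \<subseteq> carrier G" "generate G K = carrier G" "h ` K \<subseteq> Gen"
    and "x \<in> carrier G" "y \<in> carrier G"
  shows "word_dist H Gen (h x) (h y) \<le> word_dist G K x y"
  using word_length_hom_le[OF assms(1,3), of "inv x \<otimes> y"] assms(2,4,5)
  by (simp add: word_dist_def)

lemma (in group) symp_coarse_step:
  assumes "Gen \<subseteq> carrier G" "generate G Gen = carrier G" "S \<subseteq> carrier G"
  shows "symp (coarse_step G Gen S r)"
proof -
  have "word_dist G Gen x y = word_dist G Gen y x" if "x \<in> S" "y \<in> S" for x y
    using that assms word_dist_commute by blast
  then show ?thesis by (auto intro!: sympI simp: coarse_step_def)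
qed

context group_hom
begin

context
  fixes K Gen Q P
  assumes gens: "K \<subseteq> carrier G" "generate G K = carrier G" "h ` K \<subseteq> Gen"
    and cones: "Q \<subseteq> carrier G" "h ` Q \<subseteq> P" "P \<subseteq> carrier H"
      "\<And>p q. p \<in> P \<Longrightarrow> q \<in> P \<Longrightarrow> p \<otimes>\<^bsub>H\<^esub> q \<in> P"
begin

lemma rtranclp_coarse_step_translate:
  assumes "g \<in> P" "(coarse_step G K Q r)\<^sup>*\<^sup>* x y"
  shows "(coarse_step H Gen P r)\<^sup>*\<^sup>* (g \<otimes>\<^bsub>H\<^esub> h x) (g \<otimes>\<^bsub>H\<^esub> h y)"
  using assms(2)
proof (induction rule: rtranclp_induct)
  case (step y z)
  then have yz: "y \<in> Q" "z \<in> Q" "word_dist G K y z \<le> r" by (auto simp: coarse_step_def)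
  then have "word_dist H Gen (g \<otimes>\<^bsub>H\<^esub> h y) (g \<otimes>\<^bsub>H\<^esub> h z) = word_dist H Gen (h y) (h z)"
    using assms(1) cones(1,3) by (intro H.word_dist_mult_left) auto
  also have "\<dots> \<le> word_dist G K y z" using yz cones(1) by (intro word_dist_hom_le[OF gens]) auto
  also have "\<dots> \<le> r" by fact
  finally have "coarse_step H Gen P r (g \<otimes>\<^bsub>H\<^esub> h y) (g \<otimes>\<^bsub>H\<^esub> h z)"
    using yz assms(1) cones(2,4) by (auto simp: coarse_step_def)
  with step.IH show ?case by (rule rtranclp.rtrancl_into_rtrancl)
qed simp

lemma rtranclp_coarse_step_mult_image:
  assumes "g \<in> P" "\<forall>p\<in>Q. \<forall>q\<in>Q. (coarse_step G K Q r)\<^sup>*\<^sup>* p q" "c \<in> insert \<one> Q"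
  shows "(coarse_step H Gen P (r + word_dist H Gen \<one>\<^bsub>H\<^esub> (h (SOME e. e \<in> Q))))\<^sup>*\<^sup>*
    g (g \<otimes>\<^bsub>H\<^esub> h c)"
  \<comment> \<open>The first step goes from g to g (h e) for a base point e of Q. If Q is empty, the
    SOME term is junk, but then c = 1 and no step is needed.\<close>
proof (cases "c = \<one>")
  case True
  then show ?thesis using assms(1) cones(3) by auto
next
  case False
  then have "c \<in> Q" using assms(3) by simp
  define e where "e = (SOME e. e \<in> Q)"
  have "e \<in> Q" unfolding e_def using \<open>c \<in> Q\<close> by (rule someI)
  let ?R = "r + word_dist H Gen \<one>\<^bsub>H\<^esub> (h e)"
  have "g \<in> carrier H" "h e \<in> carrier H" using assms(1) \<open>e \<in> Q\<close> cones(1,3) by auto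
  then have "word_dist H Gen g (g \<otimes>\<^bsub>H\<^esub> h e) = word_dist H Gen \<one>\<^bsub>H\<^esub> (h e)"
    using H.word_dist_mult_left[of g "\<one>\<^bsub>H\<^esub>" "h e" Gen] by simp
  then have "coarse_step H Gen P ?R g (g \<otimes>\<^bsub>H\<^esub> h e)"
    using assms(1) \<open>e \<in> Q\<close> cones(2,4) by (auto simp: coarse_step_def)
  moreover have "(coarse_step H Gen P r)\<^sup>*\<^sup>* (g \<otimes>\<^bsub>H\<^esub> h e) (g \<otimes>\<^bsub>H\<^esub> h c)"
    using rtranclp_coarse_step_translate[OF assms(1)] assms(2) \<open>e \<in> Q\<close> \<open>c \<in> Q\<close> by blast
  then have "(coarse_step H Gen P ?R)\<^sup>*\<^sup>* (g \<otimes>\<^bsub>H\<^esub> h e) (g \<otimes>\<^bsub>H\<^esub> h c)"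
    by (rule rtranclp_coarse_step_mono) simp
  ultimately show ?thesis unfolding e_def by (rule converse_rtranclp_into_rtranclp)
qed

end

end

lemma (in group_hom) positive_cone_vimage:
  assumes "inj_on h (carrier G)" "positive_cone H P"
  shows "positive_cone G {x \<in> carrier G. h x \<in> P}" (is "positive_cone G ?Q")
proof -
  from assms(2) have P: "P \<subseteq> carrier H" "\<And>p q. p \<in> P \<Longrightarrow> q \<in> P \<Longrightarrow> p \<otimes>\<^bsub>H\<^esub> q \<in> P"
    "carrier H = P \<union> (\<lambda>x. inv\<^bsub>H\<^esub> x) ` P \<union> {\<one>\<^bsub>H\<^esub>}" "P \<inter> (\<lambda>x. inv\<^bsub>H\<^esub> x) ` P = {}"
    "\<one>\<^bsub>H\<^esub> \<notin> P"
    unfolding positive_cone_def by auto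
  have "x \<in> ?Q \<union> (\<lambda>x. inv x) ` ?Q \<union> {\<one>}" if x: "x \<in> carrier G" for x
  proof -
    have "h x \<in> carrier H" using x by simp
    then consider "h x \<in> P" | p where "p \<in> P" "h x = inv\<^bsub>H\<^esub> p" | "h x = \<one>\<^bsub>H\<^esub>"
      using P(3) by blast
    then show ?thesis
    proof cases
      case (2 p)
      then have "inv x \<in> ?Q" using x P(1) by auto
      moreover have "x = inv (inv x)" using x by simp
      ultimately show ?thesis by blast
    next
      case 3
      then show ?thesis using inj_onD[OF assms(1), of x \<one>] x by simp
    qed (use x in auto)
  qed
  moreover have "?Q \<inter> (\<lambda>x. inv x) ` ?Q = {}" using P(4) by auto
  moreover have "\<one> \<notin> (\<lambda>x. inv x) ` ?Q" using P(5) by (auto simp: eq_commute[of \<one>])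
  ultimately show ?thesis using P(2,5) unfolding positive_cone_def by auto
qed

lemma (in group) positive_cone_upper_bound:
  assumes "positive_cone G Q" "a \<in> carrier G" "a' \<in> carrier G"
  obtains u where "u \<in> carrier G" "inv a \<otimes> u \<in> insert \<one> Q" "inv a' \<otimes> u \<in> insert \<one> Q"
proof (cases "inv a \<otimes> a' \<in> insert \<one> Q")
  case True
  with that show ?thesis using assms(3) by simp
next
  case False
  then obtain q where "q \<in> Q" "inv a \<otimes> a' = inv q"
    using assms unfolding positive_cone_def by blast
  moreover have "q \<in> carrier G" using assms(1) \<open>q \<in> Q\<close> unfolding positive_cone_def by auto
  ultimately have "inv a' \<otimes> a = q"
    using assms(2,3) by (metis inv_inv inv_mult_group inv_closed)
  with that show ?thesis using assms(2) \<open>q \<in> Q\<close> by simp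
qed

lemma group_hom_DirProd_inl:
  assumes "group A" "group B"
  shows "group_hom A (A \<times>\<times> B) (\<lambda>a. (a, \<one>\<^bsub>B\<^esub>))"
proof -
  interpret B: group B by fact
  show ?thesis using assms by (auto simp: group_hom_def group_hom_axioms_def hom_def DirProd_group)
qed

lemma group_hom_DirProd_inr:
  assumes "group A" "group B"
  shows "group_hom B (A \<times>\<times> B) (\<lambda>b. (\<one>\<^bsub>A\<^esub>, b))"
proof -
  interpret A: group A by fact
  show ?thesis using assms by (auto simp: group_hom_def group_hom_axioms_def hom_def DirProd_group)
qed

lemma fin_gen_set_DirProd:
  assumes "group A" "group B" "fin_gen_set A GA" "fin_gen_set B GB"
  shows "fin_gen_set (A \<times>\<times> B) ((\<lambda>a. (a, \<one>\<^bsub>B\<^esub>)) ` GA \<union> (\<lambda>b. (\<one>\<^bsub>A\<^esub>, b)) ` GB)"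
    (is "fin_gen_set ?G ?Gen")
proof -
  let ?inl = "\<lambda>a. (a, \<one>\<^bsub>B\<^esub>)" and ?inr = "\<lambda>b. (\<one>\<^bsub>A\<^esub>, b)"
  interpret G: group ?G using DirProd_group[OF assms(1,2)] .
  interpret inl: group_hom A ?G ?inl by (rule group_hom_DirProd_inl[OF assms(1,2)])
  interpret inr: group_hom B ?G ?inr by (rule group_hom_DirProd_inr[OF assms(1,2)])
  have gens: "GA \<subseteq> carrier A" "generate A GA = carrier A" "GB \<subseteq> carrier B" "generate B GB = carrier B"
    using assms(3,4) unfolding fin_gen_set_def by auto
  have inl_gen: "?inl ` carrier A \<subseteq> generate ?G ?Gen"
    using inl.generate_img[OF gens(1)] G.mono_generate[of "?inl ` GA" ?Gen] gens(2) by blast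
  have inr_gen: "?inr ` carrier B \<subseteq> generate ?G ?Gen"
    using inr.generate_img[OF gens(3)] G.mono_generate[of "?inr ` GB" ?Gen] gens(4) by blast
  have pair_gen: "(a, b) \<in> generate ?G ?Gen" if "a \<in> carrier A" "b \<in> carrier B" for a b
  proof -
    have "?inl a \<otimes>\<^bsub>?G\<^esub> ?inr b \<in> generate ?G ?Gen"
      using inl_gen inr_gen that by (blast intro: generate.eng)
    then show ?thesis using that by simp
  qed
  have gen_carr: "?Gen \<subseteq> carrier ?G" using gens(1,3) by auto
  have "generate ?G ?Gen = carrier ?G"
  proof
    show "generate ?G ?Gen \<subseteq> carrier ?G" using G.generate_in_carrier[OF gen_carr] by blast
    show "carrier ?G \<subseteq> generate ?G ?Gen" using pair_gen by auto
  qed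
  with gen_carr show ?thesis using assms(3,4) unfolding fin_gen_set_def by auto
qed

lemma positive_cone_DirProd_vimage_inl:
  "group A \<Longrightarrow> group B \<Longrightarrow> positive_cone (A \<times>\<times> B) P \<Longrightarrow>
    positive_cone A {a \<in> carrier A. (a, \<one>\<^bsub>B\<^esub>) \<in> P}"
  by (rule group_hom.positive_cone_vimage[OF group_hom_DirProd_inl]) (auto simp: inj_on_def)

lemma positive_cone_DirProd_vimage_inr:
  "group A \<Longrightarrow> group B \<Longrightarrow> positive_cone (A \<times>\<times> B) P \<Longrightarrow>
    positive_cone B {b \<in> carrier B. (\<one>\<^bsub>A\<^esub>, b) \<in> P}"
  by (rule group_hom.positive_cone_vimage[OF group_hom_DirProd_inr]) (auto simp: inj_on_def)

lemma DirProd_cone_staircase: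
  assumes "group A" "group B" "positive_cone (A \<times>\<times> B) P" "symp L" "transp L"
    and inl: "\<And>g c. g \<in> P \<Longrightarrow> c \<in> insert \<one>\<^bsub>A\<^esub> {a \<in> carrier A. (a, \<one>\<^bsub>B\<^esub>) \<in> P} \<Longrightarrow>
      L g (g \<otimes>\<^bsub>A \<times>\<times> B\<^esub> (c, \<one>\<^bsub>B\<^esub>))"
    and inr: "\<And>g c. g \<in> P \<Longrightarrow> c \<in> insert \<one>\<^bsub>B\<^esub> {b \<in> carrier B. (\<one>\<^bsub>A\<^esub>, b) \<in> P} \<Longrightarrow>
      L g (g \<otimes>\<^bsub>A \<times>\<times> B\<^esub> (\<one>\<^bsub>A\<^esub>, c))"
    and "g \<in> P" "g' \<in> P"
  shows "L g g'"
proof -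
  interpret A: group A by fact
  interpret B: group B by fact
  interpret G: group "A \<times>\<times> B" using DirProd_group[OF assms(1,2)] .
  define QA where "QA = {a \<in> carrier A. (a, \<one>\<^bsub>B\<^esub>) \<in> P}"
  define QB where "QB = {b \<in> carrier B. (\<one>\<^bsub>A\<^esub>, b) \<in> P}"
  have "positive_cone A QA" "positive_cone B QB"
    unfolding QA_def QB_def
    using positive_cone_DirProd_vimage_inl positive_cone_DirProd_vimage_inr assms(1-3) by blast+
  have P: "P \<subseteq> carrier (A \<times>\<times> B)" "\<And>p q. p \<in> P \<Longrightarrow> q \<in> P \<Longrightarrow> p \<otimes>\<^bsub>A \<times>\<times> B\<^esub> q \<in> P"
    using assms(3) unfolding positive_cone_def by blast+
  obtain a b a' b' where g: "g = (a, b)" "g' = (a', b')" by (cases g, cases g') simp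
  have ab: "a \<in> carrier A" "b \<in> carrier B" "a' \<in> carrier A" "b' \<in> carrier B"
    using P(1) assms(8,9) g by auto
  obtain u where
    u: "u \<in> carrier A" "inv\<^bsub>A\<^esub> a \<otimes>\<^bsub>A\<^esub> u \<in> insert \<one>\<^bsub>A\<^esub> QA" "inv\<^bsub>A\<^esub> a' \<otimes>\<^bsub>A\<^esub> u \<in> insert \<one>\<^bsub>A\<^esub> QA"
    using A.positive_cone_upper_bound[OF \<open>positive_cone A QA\<close> ab(1,3)] .
  obtain v where
    v: "v \<in> carrier B" "inv\<^bsub>B\<^esub> b \<otimes>\<^bsub>B\<^esub> v \<in> insert \<one>\<^bsub>B\<^esub> QB" "inv\<^bsub>B\<^esub> b' \<otimes>\<^bsub>B\<^esub> v \<in> insert \<one>\<^bsub>B\<^esub> QB"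
    using B.positive_cone_upper_bound[OF \<open>positive_cone B QB\<close> ab(2,4)] .
  have in_P: "p \<otimes>\<^bsub>A \<times>\<times> B\<^esub> q \<in> P" if "p \<in> P" "q \<in> insert \<one>\<^bsub>A \<times>\<times> B\<^esub> P" for p q
  proof (cases "q = \<one>\<^bsub>A \<times>\<times> B\<^esub>")
    case True
    then show ?thesis using G.r_one[of p] that(1) P(1) by auto
  qed (use that in \<open>auto intro: P(2)\<close>)
  have "L g (u, b)" "L g' (u, b')"
    using inl[OF assms(8) u(2)[unfolded QA_def]] inl[OF assms(9) u(3)[unfolded QA_def]]
    by (simp_all add: g ab u(1) A.m_assoc[symmetric])
  moreover have "(u, b) \<in> P" "(u, b') \<in> P"
    using in_P[OF assms(8), of "(inv\<^bsub>A\<^esub> a \<otimes>\<^bsub>A\<^esub> u, \<one>\<^bsub>B\<^esub>)"]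
      in_P[OF assms(9), of "(inv\<^bsub>A\<^esub> a' \<otimes>\<^bsub>A\<^esub> u, \<one>\<^bsub>B\<^esub>)"] u(2,3)
    by (auto simp: g ab u(1) QA_def A.m_assoc[symmetric])
  then have "L (u, b) (u, v)" "L (u, b') (u, v)"
    using inr[of "(u, b)" "inv\<^bsub>B\<^esub> b \<otimes>\<^bsub>B\<^esub> v"] inr[of "(u, b')" "inv\<^bsub>B\<^esub> b' \<otimes>\<^bsub>B\<^esub> v"] v(2,3)
    by (simp_all add: ab u(1) v(1) QB_def B.m_assoc[symmetric])
  ultimately show ?thesis using assms(4,5) by (metis sympD transpD)
qed

lemma coarsely_connected_DirProd_cone:
  assumes A: "group A" "fin_gen_set A GA" "\<And>Q. positive_cone A Q \<Longrightarrow> coarsely_connected A GA Q"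
    and B: "group B" "fin_gen_set B GB" "\<And>Q. positive_cone B Q \<Longrightarrow> coarsely_connected B GB Q"
    and P: "positive_cone (A \<times>\<times> B) P"
  shows "coarsely_connected (A \<times>\<times> B) ((\<lambda>a. (a, \<one>\<^bsub>B\<^esub>)) ` GA \<union> (\<lambda>b. (\<one>\<^bsub>A\<^esub>, b)) ` GB) P"
    (is "coarsely_connected ?G ?Gen P")
proof -
  interpret G: group ?G using DirProd_group[OF A(1) B(1)] .
  have gens: "?Gen \<subseteq> carrier ?G" "generate ?G ?Gen = carrier ?G"
    using fin_gen_set_DirProd[OF A(1) B(1) A(2) B(2)] unfolding fin_gen_set_def by auto
  have gensA: "GA \<subseteq> carrier A" "generate A GA = carrier A" "(\<lambda>a. (a, \<one>\<^bsub>B\<^esub>)) ` GA \<subseteq> ?Gen"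
    using A(2) unfolding fin_gen_set_def by auto
  have gensB: "GB \<subseteq> carrier B" "generate B GB = carrier B" "(\<lambda>b. (\<one>\<^bsub>A\<^esub>, b)) ` GB \<subseteq> ?Gen"
    using B(2) unfolding fin_gen_set_def by auto
  have cone: "P \<subseteq> carrier ?G" "\<And>p q. p \<in> P \<Longrightarrow> q \<in> P \<Longrightarrow> p \<otimes>\<^bsub>?G\<^esub> q \<in> P"
    using P unfolding positive_cone_def by blast+
  define QA where "QA = {a \<in> carrier A. (a, \<one>\<^bsub>B\<^esub>) \<in> P}"
  define QB where "QB = {b \<in> carrier B. (\<one>\<^bsub>A\<^esub>, b) \<in> P}"
  obtain rA where "rA \<ge> 1" and connA: "\<forall>p\<in>QA. \<forall>q\<in>QA. (coarse_step A GA QA rA)\<^sup>*\<^sup>* p q"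
    using A(3)[OF positive_cone_DirProd_vimage_inl[OF A(1) B(1) P]]
    unfolding coarsely_connected_iff_rtranclp QA_def by blast
  obtain rB where connB: "\<forall>p\<in>QB. \<forall>q\<in>QB. (coarse_step B GB QB rB)\<^sup>*\<^sup>* p q"
    using B(3)[OF positive_cone_DirProd_vimage_inr[OF A(1) B(1) P]]
    unfolding coarsely_connected_iff_rtranclp QB_def by blast
  define R where "R = (rA + word_dist ?G ?Gen \<one>\<^bsub>?G\<^esub> (SOME e. e \<in> QA, \<one>\<^bsub>B\<^esub>))
    + (rB + word_dist ?G ?Gen \<one>\<^bsub>?G\<^esub> (\<one>\<^bsub>A\<^esub>, SOME e. e \<in> QB))"
  have "(coarse_step ?G ?Gen P R)\<^sup>*\<^sup>* g g'" if "g \<in> P" "g' \<in> P" for g g'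
  proof (rule DirProd_cone_staircase[OF A(1) B(1) P _ transp_rtranclp _ _ that])
    show "symp (coarse_step ?G ?Gen P R)\<^sup>*\<^sup>*"
      using G.symp_coarse_step[OF gens cone(1)] by (rule symp_rtranclp)
  next
    fix g c assume "g \<in> P" "c \<in> insert \<one>\<^bsub>A\<^esub> {a \<in> carrier A. (a, \<one>\<^bsub>B\<^esub>) \<in> P}"
    then have "c \<in> insert \<one>\<^bsub>A\<^esub> QA" by (simp add: QA_def)
    have "(coarse_step ?G ?Gen P (rA + word_dist ?G ?Gen \<one>\<^bsub>?G\<^esub> (SOME e. e \<in> QA, \<one>\<^bsub>B\<^esub>)))\<^sup>*\<^sup>*
        g (g \<otimes>\<^bsub>?G\<^esub> (c, \<one>\<^bsub>B\<^esub>))"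
      by (rule group_hom.rtranclp_coarse_step_mult_image[OF group_hom_DirProd_inl[OF A(1) B(1)]
          gensA _ _ cone \<open>g \<in> P\<close> connA \<open>c \<in> insert \<one>\<^bsub>A\<^esub> QA\<close>]) (auto simp: QA_def)
    then show "(coarse_step ?G ?Gen P R)\<^sup>*\<^sup>* g (g \<otimes>\<^bsub>?G\<^esub> (c, \<one>\<^bsub>B\<^esub>))"
      by (rule rtranclp_coarse_step_mono) (simp add: R_def)
  next
    fix g c assume "g \<in> P" "c \<in> insert \<one>\<^bsub>B\<^esub> {b \<in> carrier B. (\<one>\<^bsub>A\<^esub>, b) \<in> P}"
    then have "c \<in> insert \<one>\<^bsub>B\<^esub> QB" by (simp add: QB_def)
    have "(coarse_step ?G ?Gen P (rB + word_dist ?G ?Gen \<one>\<^bsub>?G\<^esub> (\<one>\<^bsub>A\<^esub>, SOME e. e \<in> QB)))\<^sup>*\<^sup>*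
        g (g \<otimes>\<^bsub>?G\<^esub> (\<one>\<^bsub>A\<^esub>, c))"
      by (rule group_hom.rtranclp_coarse_step_mult_image[OF group_hom_DirProd_inr[OF A(1) B(1)]
          gensB _ _ cone \<open>g \<in> P\<close> connB \<open>c \<in> insert \<one>\<^bsub>B\<^esub> QB\<close>]) (auto simp: QB_def)
    then show "(coarse_step ?G ?Gen P R)\<^sup>*\<^sup>* g (g \<otimes>\<^bsub>?G\<^esub> (\<one>\<^bsub>A\<^esub>, c))"
      by (rule rtranclp_coarse_step_mono) (simp add: R_def)
  qed
  then show ?thesis
    unfolding coarsely_connected_iff_rtranclp using \<open>rA \<ge> 1\<close> by (intro exI[of _ R]) (auto simp: R_def)
qed

theorem proposition4p17:
  fixes A :: "('a, 'c) monoid_scheme" and B :: "('b, 'd) monoid_scheme"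
  assumes "group A" and "group B"
    and "finitely_generated A" and "finitely_generated B"
    and "left_orderable A" and "left_orderable B"
    and "Prieto A" and "Prieto B"
  shows "Prieto (A \<times>\<times> B)"
proof -
  obtain GA where "fin_gen_set A GA" "\<And>Q. positive_cone A Q \<Longrightarrow> coarsely_connected A GA Q"
    using \<open>Prieto A\<close> unfolding Prieto_def by blast
  moreover obtain GB where "fin_gen_set B GB" "\<And>Q. positive_cone B Q \<Longrightarrow> coarsely_connected B GB Q"
    using \<open>Prieto B\<close> unfolding Prieto_def by blast
  ultimately show ?thesis
    unfolding Prieto_def
    using fin_gen_set_DirProd coarsely_connected_DirProd_cone \<open>group A\<close> \<open>group B\<close> by blast
qed

end
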